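(* Let $n > 3$ be a real number. Then $\cos^n x < 1 - \sin x$ for all real $x$ with $\frac{2\pi}{n+1} \leq x < \frac{\pi}{2}$. *)

theory Defs
  imports Complex_Main
begin

end

theory Submission
  imports Defs "HOL-Analysis.Analysis"
begin

text \<open>
  Since \<open>cos\<^sup>2 x = (1 - sin x)(1 + sin x)\<close>, the claim is equivalent to
  \<open>cos x powr (n - 2) * (1 + sin x) < 1\<close>. For \<open>x \<ge> 6/5\<close> this holds because
  \<open>cos x < 1/2\<close> and \<open>2 cos x sin x \<le> 1\<close>. For smaller \<open>x\<close> write \<open>m = n - 2\<close> and
  \<open>a = 1 - cos x\<close>: then \<open>cos x powr m \<le> exp (-m a)\<close> and \<open>1 + sin x \<le> 1 + x\<close>, and the
  quartic Taylor bound for \<open>cos\<close> together with \<open>(n + 1) x \<ge> 2 pi\<close> gives \<open>m a > x\<close>,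
  so the product is below \<open>exp (-m a) (1 + m a) \<le> 1\<close>.
\<close>

lemma cos_ge_one_minus_square_half: "1 - x\<^sup>2 / 2 \<le> cos (x::real)"
proof -
  let ?f = "\<lambda>x::real. cos x - 1 + x\<^sup>2 / 2"
  have "?f 0 \<le> ?f \<bar>x\<bar>"
  proof (rule DERIV_nonneg_imp_nondecreasing[OF abs_ge_zero])
    fix u :: real assume "0 \<le> u"
    then have "0 \<le> u - sin u" using sin_x_le_x by simp
    moreover have "(?f has_real_derivative (u - sin u)) (at u)"
      by (auto intro!: derivative_eq_intros)
    ultimately show "\<exists>y. (?f has_real_derivative y) (at u) \<and> 0 \<le> y" by blast
  qed
  then show ?thesis by simp
qed

lemma sin_ge_cubic_taylor:
  fixes x :: real assumes "0 \<le> x" shows "x - x ^ 3 / 6 \<le> sin x"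
proof -
  let ?f = "\<lambda>x::real. sin x - x + x ^ 3 / 6"
  have "?f 0 \<le> ?f x"
  proof (rule DERIV_nonneg_imp_nondecreasing[OF assms])
    fix u :: real
    have "0 \<le> cos u - 1 + u\<^sup>2 / 2" using cos_ge_one_minus_square_half[of u] by simp
    moreover have "(?f has_real_derivative (cos u - 1 + u\<^sup>2 / 2)) (at u)"
      by (auto intro!: derivative_eq_intros simp: field_simps power2_eq_square)
    ultimately show "\<exists>y. (?f has_real_derivative y) (at u) \<and> 0 \<le> y" by blast
  qed
  then show ?thesis by simp
qed

lemma cos_le_quartic_taylor: "cos (x::real) \<le> 1 - x\<^sup>2 / 2 + x ^ 4 / 24"
proof -
  let ?f = "\<lambda>x::real. 1 - x\<^sup>2 / 2 + x ^ 4 / 24 - cos x"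
  have "?f 0 \<le> ?f \<bar>x\<bar>"
  proof (rule DERIV_nonneg_imp_nondecreasing[OF abs_ge_zero])
    fix u :: real assume "0 \<le> u"
    then have "0 \<le> sin u - u + u ^ 3 / 6" using sin_ge_cubic_taylor[of u] by simp
    moreover have "(?f has_real_derivative (sin u - u + u ^ 3 / 6)) (at u)"
      by (auto intro!: derivative_eq_intros simp: field_simps power2_eq_square)
    ultimately show "\<exists>y. (?f has_real_derivative y) (at u) \<and> 0 \<le> y" by blast
  qed
  moreover have "\<bar>x\<bar> ^ 4 = x ^ 4" by (simp add: power_even_abs)
  ultimately show ?thesis by simp
qed

lemma powr_le_exp_neg_mult_one_minus:
  fixes c m :: real assumes "0 < c" "0 \<le> m"
  shows "c powr m \<le> exp (- (m * (1 - c)))"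
proof -
  have "m * ln c \<le> m * (c - 1)"
    using ln_le_minus_one[OF \<open>0 < c\<close>] \<open>0 \<le> m\<close> by (rule mult_left_mono)
  then show ?thesis using \<open>0 < c\<close> by (simp add: powr_def algebra_simps)
qed

lemma exp_neg_mult_one_plus_less_one:
  fixes s t :: real assumes "s < t" shows "exp (- t) * (1 + s) < 1"
proof -
  have "exp (- t) * (1 + s) < exp (- t) * (1 + t)" using assms by simp
  also have "\<dots> \<le> exp (- t) * exp t" by (intro mult_left_mono) auto
  finally show ?thesis by (simp add: exp_minus)
qed

lemma cos_powr_mult_one_plus_sin_less_one_large:
  fixes m x :: real assumes "1 < m" "6/5 \<le> x" "x < pi / 2"
  shows "cos x powr m * (1 + sin x) < 1"
proof -
  have cos_pos: "0 < cos x" and sin_pos: "0 < sin x"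
    using assms by (auto intro: cos_gt_zero sin_gt_zero)
  have "cos x \<le> cos (6/5)" using assms pi_gt3 by (intro cos_monotone_0_pi_le) auto
  also have "\<dots> \<le> 1 - (6/5)\<^sup>2 / 2 + (6/5) ^ 4 / 24" by (rule cos_le_quartic_taylor)
  finally have cos_small: "cos x < 1/2" by (simp add: power2_eq_square power4_eq_xxxx)
  have "0 \<le> (cos x - sin x)\<^sup>2" by simp
  then have "2 * cos x * sin x \<le> 1"
    using sin_cos_squared_add[of x] unfolding power2_diff by linarith
  with cos_small have "cos x * (1 + sin x) < 1" by (simp add: algebra_simps)
  moreover have "cos x powr m * (1 + sin x) < cos x * (1 + sin x)"
  proof (rule mult_strict_right_mono)
    show "cos x powr m < cos x"
      using powr_less_mono'[of "cos x" 1 m] cos_pos cos_small \<open>1 < m\<close> by simp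
  qed (use sin_pos in simp)
  ultimately show ?thesis by linarith
qed

lemma cos_powr_mult_one_plus_sin_less_one_small:
  fixes n x :: real assumes "3 < n" "2 * pi \<le> (n + 1) * x" "0 < x" "x < 6/5"
  shows "cos x powr (n - 2) * (1 + sin x) < 1"
proof -
  define m a where "m = n - 2" and "a = 1 - cos x"
  define q where "q = x * (12 - x\<^sup>2) / 24"
  have "x * x \<le> (6/5) * (6/5)" using assms by (intro mult_mono) auto
  then have quad_bound: "264/25 \<le> 12 - x\<^sup>2" by (simp add: power2_eq_square)
  have "(12/5) * (264/25) \<le> (2 * pi - 3 * x) * (12 - x\<^sup>2)"
    using pi_gt3 \<open>x < 6/5\<close> quad_bound by (intro mult_mono) auto
  then have "x < (2 * pi - 3 * x) * q"
    using \<open>0 < x\<close> by (simp add: q_def)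
  also have "\<dots> \<le> m * x * q"
  proof (rule mult_right_mono)
    show "2 * pi - 3 * x \<le> m * x" using assms(2) by (simp add: m_def algebra_simps)
    show "0 \<le> q" using \<open>0 < x\<close> quad_bound by (simp add: q_def)
  qed
  also have "\<dots> = m * (x\<^sup>2 / 2 - x ^ 4 / 24)"
    unfolding q_def by (simp add: field_simps power2_eq_square power4_eq_xxxx)
  also have "\<dots> \<le> m * a"
    using cos_le_quartic_taylor[of x] \<open>3 < n\<close> by (intro mult_left_mono) (auto simp: a_def m_def)
  finally have "sin x < m * a" using sin_x_le_x[of x] \<open>0 < x\<close> by simp
  then have "exp (- (m * a)) * (1 + sin x) < 1" by (rule exp_neg_mult_one_plus_less_one)
  moreover have "cos x powr m * (1 + sin x) \<le> exp (- (m * a)) * (1 + sin x)"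
  proof (rule mult_right_mono)
    show "cos x powr m \<le> exp (- (m * a))"
      using assms pi_gt3 by (auto simp: m_def a_def intro!: powr_le_exp_neg_mult_one_minus cos_gt_zero)
    show "0 \<le> 1 + sin x" using abs_sin_le_one[of x] by linarith
  qed
  ultimately show ?thesis unfolding m_def by linarith
qed

lemma cos_powr_less_one_minus_sin:
  fixes n x :: real
  assumes "0 < cos x" and "cos x powr (n - 2) * (1 + sin x) < 1"
  shows "cos x powr n < 1 - sin x"
proof -
  have "(sin x)\<^sup>2 < 1" using assms(1) sin_cos_squared_add[of x] by (smt (verit) zero_less_power2)
  then have sin_bound: "\<bar>sin x\<bar> < 1" by (simp add: abs_square_less_1)
  have "cos x powr n = cos x powr 2 * cos x powr (n - 2)" by (simp add: powr_add[symmetric])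
  also have "cos x powr 2 = (1 - sin x) * (1 + sin x)"
    using assms(1) by (simp add: cos_squared_eq power2_eq_square algebra_simps)
  also have "(1 - sin x) * (1 + sin x) * cos x powr (n - 2) < (1 - sin x) * 1"
  proof -
    have "0 < 1 - sin x" using sin_bound by simp
    from mult_strict_left_mono[OF assms(2) this] show ?thesis by (simp only: ac_simps)
  qed
  finally show ?thesis by simp
qed

theorem mainTheorem2:
  fixes n x :: real
  assumes "n > 3"
    and "2 * pi / (n + 1) \<le> x" and "x < pi / 2"
  shows "cos x powr n < 1 - sin x"
proof (rule cos_powr_less_one_minus_sin)
  have "0 < 2 * pi / (n + 1)" using assms(1) by simp
  with assms(2) have "0 < x" by linarith
  with assms(3) show "0 < cos x" by (intro cos_gt_zero) auto
  show "cos x powr (n - 2) * (1 + sin x) < 1"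
  proof (cases "x < 6/5")
    case True
    have "2 * pi \<le> (n + 1) * x" using assms(1,2) by (simp add: field_simps)
    with assms(1) \<open>0 < x\<close> True show ?thesis
      by (intro cos_powr_mult_one_plus_sin_less_one_small)
  next
    case False
    with assms show ?thesis by (intro cos_powr_mult_one_plus_sin_less_one_large) auto
  qed
qed

end
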